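(* (a) If $\chi,\chi'\in M_{\mathbb{R}}$ differ by a real multiple of $\tau_d$, then $(r,p)(\chi)=(r,p)(\chi')$. (b) Let $\chi\in M$ be a weight, let $w\in\mathfrak{S}_d$, and let $\delta\in M_{\mathbb{R}}^{\mathfrak{S}_d}$ be a Weyl-invariant real weight. Then \[(r,p)(\chi+\rho+\delta)=(r,p)(w*\chi+\rho+\delta),\] where $w*\chi:=w(\chi+\rho)-\rho$.
   Context: Let $Q=(I,E)$ be a symmetric quiver (for all $i,j\in I$ the number of arrows $i\to j$ equals the number of arrows $j\to i$), with source and target maps $s,t:E\to I$. Fix $d=(d_i)_{i\in I}\in\mathbb{N}^I$. Let $R(d)=\bigoplus_{a\in E}\mathrm{Hom}(\mathbb{C}^{d_{s(a)}},\mathbb{C}^{d_{t(a)}})$ with $G(d)=\prod_{i\in I}GL(d_i)$ acting by conjugation. Standing assumption: the subquiver $Q^d$ of $Q$ with vertex set $\{i\in I: d_i\neq 0\}$ is connected and is not the quiver with one vertex and no arrows. Let $T(d)$ be the diagonal maximal torus, with weight lattice $M=\bigoplus_{i\in I,1\le j\le d_i}\mathbb{Z}\beta^i_j$ and $M_{\mathbb{R}}=M\otimes\mathbb{R}$. Let $\mathcal{W}$ be the multiset of $T(d)$-weights of $R(d)$: for each arrow $a:i\to j$ and each $1\le x\le d_i$, $1\le y\le d_j$, the weight $\beta^j_y-\beta^i_x$. Let $\tau_d:=\big(\sum_{i,j}\beta^i_j\big)/\big(\sum_i d_i\big)$. Define the region $\mathbb{W}:=\sum_{\beta\in\mathcal{W}}[0,\beta]+\mathbb{R}\tau_d\subset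 M_{\mathbb{R}}$ (Minkowski sum, one segment for each element of the multiset). For $\chi\in M_{\mathbb{R}}$, the $r$-invariant $r(\chi)$ is the smallest real $r\ge 0$ with $\chi\in r\mathbb{W}$. If $r(\chi)=r$, then $\chi=\sum_{\beta\in\mathcal{W}}c_\beta\beta+c\tau_d$ with $c\in\mathbb{R}$ and $-r\le c_\beta\le 0$ (one coefficient for each element of the multiset); the $p$-invariant $p(\chi)$ is the smallest number of coefficients $c_\beta$ equal to $-r$ among all such expressions, and $(r,p)(\chi):=(r(\chi),p(\chi))$. The Weyl group $\mathfrak{S}_d=\prod_{i\in I}\mathfrak{S}_{d_i}$ acts on $M_{\mathbb{R}}$ by $w\cdot\beta^i_j=\beta^i_{w^i(j)}$; $M_{\mathbb{R}}^{\mathfrak{S}_d}$ denotes the invariants. The positive roots of $G(d)$ are $\beta^i_a-\beta^i_b$ for $i\in I$ and $a<b$, and $\rho$ is half their sum. *)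

theory Defs
  imports Complex_Main "HOL-Combinatorics.Permutations"
begin

text \<open>A quiver is given by a finite vertex set I, a finite arrow set E and
source/target maps s, t. A real weight in M_R is a function on the index set
of basis vectors beta^i_j (i in I, 1 <= j <= d i), extended by zero.\<close>

definition Bidx :: "'v set \<Rightarrow> ('v \<Rightarrow> nat) \<Rightarrow> ('v \<times> nat) set" where
  "Bidx I d = {(i, j). i \<in> I \<and> 1 \<le> j \<and> j \<le> d i}"

definition MR :: "'v set \<Rightarrow> ('v \<Rightarrow> nat) \<Rightarrow> ('v \<times> nat \<Rightarrow> real) set" where
  "MR I d = {\<chi>. \<forall>k. k \<notin> Bidx I d \<longrightarrow> \<chi> k = 0}"

definition Mlat :: "'v set \<Rightarrow> ('v \<Rightarrow> nat) \<Rightarrow> ('v \<times> nat \<Rightarrow> real) set" where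
  "Mlat I d = {\<chi> \<in> MR I d. \<forall>k. \<chi> k \<in> \<int>}"

definition beta :: "'v \<Rightarrow> nat \<Rightarrow> ('v \<times> nat \<Rightarrow> real)" where
  "beta i j = (\<lambda>k. if k = (i, j) then 1 else 0)"

text \<open>Index set of the multiset of T(d)-weights of R(d).\<close>
definition Widx :: "'e set \<Rightarrow> ('e \<Rightarrow> 'v) \<Rightarrow> ('e \<Rightarrow> 'v) \<Rightarrow> ('v \<Rightarrow> nat) \<Rightarrow> ('e \<times> nat \<times> nat) set" where
  "Widx E s t d = {(a, x, y). a \<in> E \<and> 1 \<le> x \<and> x \<le> d (s a) \<and> 1 \<le> y \<and> y \<le> d (t a)}"

definition wt :: "('e \<Rightarrow> 'v) \<Rightarrow> ('e \<Rightarrow> 'v) \<Rightarrow> 'e \<times> nat \<times> nat \<Rightarrow> ('v \<times> nat \<Rightarrow> real)" where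
  "wt s t w = (case w of (a, x, y) \<Rightarrow> (\<lambda>k. beta (t a) y k - beta (s a) x k))"

definition tau :: "'v set \<Rightarrow> ('v \<Rightarrow> nat) \<Rightarrow> ('v \<times> nat \<Rightarrow> real)" where
  "tau I d = (\<lambda>k. (\<Sum>(i, j)\<in>Bidx I d. beta i j k) / real (\<Sum>i\<in>I. d i))"

definition Wreg :: "'v set \<Rightarrow> 'e set \<Rightarrow> ('e \<Rightarrow> 'v) \<Rightarrow> ('e \<Rightarrow> 'v) \<Rightarrow> ('v \<Rightarrow> nat)
    \<Rightarrow> ('v \<times> nat \<Rightarrow> real) set" where
  "Wreg I E s t d = {\<chi>. \<exists>c c0. (\<forall>x\<in>Widx E s t d. 0 \<le> c x \<and> c x \<le> 1) \<and>
      \<chi> = (\<lambda>k. (\<Sum>x\<in>Widx E s t d. c x * wt s t x k) + c0 * tau I d k)}"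

definition r_inv :: "'v set \<Rightarrow> 'e set \<Rightarrow> ('e \<Rightarrow> 'v) \<Rightarrow> ('e \<Rightarrow> 'v) \<Rightarrow> ('v \<Rightarrow> nat)
    \<Rightarrow> ('v \<times> nat \<Rightarrow> real) \<Rightarrow> real" where
  "r_inv I E s t d \<chi> = Inf {r. 0 \<le> r \<and> \<chi> \<in> (\<lambda>\<psi>. (\<lambda>k. r * \<psi> k)) ` Wreg I E s t d}"

definition p_inv :: "'v set \<Rightarrow> 'e set \<Rightarrow> ('e \<Rightarrow> 'v) \<Rightarrow> ('e \<Rightarrow> 'v) \<Rightarrow> ('v \<Rightarrow> nat)
    \<Rightarrow> ('v \<times> nat \<Rightarrow> real) \<Rightarrow> nat" where
  "p_inv I E s t d \<chi> = (let r = r_inv I E s t d \<chi> in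
     (LEAST n. \<exists>c c0. (\<forall>x\<in>Widx E s t d. - r \<le> c x \<and> c x \<le> 0) \<and>
        \<chi> = (\<lambda>k. (\<Sum>x\<in>Widx E s t d. c x * wt s t x k) + c0 * tau I d k) \<and>
        n = card {x\<in>Widx E s t d. c x = - r}))"

definition rp :: "'v set \<Rightarrow> 'e set \<Rightarrow> ('e \<Rightarrow> 'v) \<Rightarrow> ('e \<Rightarrow> 'v) \<Rightarrow> ('v \<Rightarrow> nat)
    \<Rightarrow> ('v \<times> nat \<Rightarrow> real) \<Rightarrow> real \<times> nat" where
  "rp I E s t d \<chi> = (r_inv I E s t d \<chi>, p_inv I E s t d \<chi>)"

definition weyl :: "'v set \<Rightarrow> ('v \<Rightarrow> nat) \<Rightarrow> ('v \<Rightarrow> nat \<Rightarrow> nat) set" where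
  "weyl I d = {w. \<forall>i\<in>I. w i permutes {1..d i}}"

text \<open>w . beta^i_j = beta^i_{w_i(j)}, extended linearly.\<close>
definition weyl_act :: "('v \<Rightarrow> nat \<Rightarrow> nat) \<Rightarrow> ('v \<times> nat \<Rightarrow> real) \<Rightarrow> ('v \<times> nat \<Rightarrow> real)" where
  "weyl_act w \<chi> = (\<lambda>(i, j). \<chi> (i, inv (w i) j))"

definition rho :: "'v set \<Rightarrow> ('v \<Rightarrow> nat) \<Rightarrow> ('v \<times> nat \<Rightarrow> real)" where
  "rho I d = (\<lambda>k. (1/2) * (\<Sum>i\<in>I. \<Sum>(a, b)\<in>{(a, b). 1 \<le> a \<and> a < b \<and> b \<le> d i}.
      beta i a k - beta i b k))"

definition dot_act :: "'v set \<Rightarrow> ('v \<Rightarrow> nat) \<Rightarrow> ('v \<Rightarrow> nat \<Rightarrow> nat) \<Rightarrow> ('v \<times> nat \<Rightarrow> real)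
    \<Rightarrow> ('v \<times> nat \<Rightarrow> real)" where
  "dot_act I d w \<chi> = (\<lambda>k. weyl_act w (\<lambda>k'. \<chi> k' + rho I d k') k - rho I d k)"

definition symmetric_quiver :: "'v set \<Rightarrow> 'e set \<Rightarrow> ('e \<Rightarrow> 'v) \<Rightarrow> ('e \<Rightarrow> 'v) \<Rightarrow> bool" where
  "symmetric_quiver I E s t \<longleftrightarrow> finite I \<and> finite E \<and> s ` E \<subseteq> I \<and> t ` E \<subseteq> I \<and>
     (\<forall>i\<in>I. \<forall>j\<in>I. card {a\<in>E. s a = i \<and> t a = j} = card {a\<in>E. s a = j \<and> t a = i})"

definition standing_assumption :: "'v set \<Rightarrow> 'e set \<Rightarrow> ('e \<Rightarrow> 'v) \<Rightarrow> ('e \<Rightarrow> 'v) \<Rightarrow> ('v \<Rightarrow> nat) \<Rightarrow> bool" where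
  "standing_assumption I E s t d \<longleftrightarrow>
    (let V = {i\<in>I. d i \<noteq> 0}; A = {a\<in>E. s a \<in> V \<and> t a \<in> V};
         R = {(s a, t a) | a. a \<in> A} \<union> {(t a, s a) | a. a \<in> A} in
     V \<noteq> {} \<and> (\<forall>i\<in>V. \<forall>j\<in>V. (i, j) \<in> R\<^sup>*) \<and> \<not> (card V = 1 \<and> A = {}))"

end

theory Submission
  imports Defs
begin

(* Both invariants see \<chi> only through its coefficient vectors, the c with
   \<chi> = \<Sum>\<^sub>\<beta> c\<^sub>\<beta> \<beta> + c\<^sub>0 \<tau>\<^sub>d for some c\<^sub>0: r(\<chi>) is the infimum of the r > 0 for which
   some such c has all entries in [0, r], and p(\<chi>) counts the entries equal to -r of
   those with entries in [-r, 0]. Neither changes when c is rearranged by a permutation of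
   the multiset of weights. Adding a multiple of \<tau>\<^sub>d only changes c\<^sub>0, which gives (a).
   A Weyl group element w fixes \<tau>\<^sub>d and permutes the weights, acting on the endpoints of
   each arrow, so the coefficient vectors of w \<chi> are rearrangements of those of \<chi>; and for
   Weyl-invariant \<delta>, w * \<chi> + \<rho> + \<delta> = w (\<chi> + \<rho> + \<delta>), which gives (b). *)

definition wt_comb :: "'v set \<Rightarrow> 'e set \<Rightarrow> ('e \<Rightarrow> 'v) \<Rightarrow> ('e \<Rightarrow> 'v) \<Rightarrow> ('v \<Rightarrow> nat)
    \<Rightarrow> ('e \<times> nat \<times> nat \<Rightarrow> real) \<Rightarrow> real \<Rightarrow> ('v \<times> nat \<Rightarrow> real)" where
  "wt_comb I E s t d c c0 = (\<lambda>k. (\<Sum>x\<in>Widx E s t d. c x * wt s t x k) + c0 * tau I d k)"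

definition wt_coeffs :: "'v set \<Rightarrow> 'e set \<Rightarrow> ('e \<Rightarrow> 'v) \<Rightarrow> ('e \<Rightarrow> 'v) \<Rightarrow> ('v \<Rightarrow> nat)
    \<Rightarrow> ('v \<times> nat \<Rightarrow> real) \<Rightarrow> ('e \<times> nat \<times> nat \<Rightarrow> real) set" where
  "wt_coeffs I E s t d \<chi> = {c. \<exists>c0. \<chi> = wt_comb I E s t d c c0}"

lemma Wreg_eq_wt_comb:
  "Wreg I E s t d = {wt_comb I E s t d c c0 | c c0. \<forall>x\<in>Widx E s t d. 0 \<le> c x \<and> c x \<le> 1}"
  unfolding Wreg_def wt_comb_def by blast

lemma scale_wt_comb:
  "(\<lambda>k. r * wt_comb I E s t d c c0 k) = wt_comb I E s t d (\<lambda>x. r * c x) (r * c0)"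
  by (simp add: wt_comb_def sum_distrib_left algebra_simps)

lemma mem_scaled_Wreg_iff:
  assumes "0 < r"
  shows "\<chi> \<in> (\<lambda>\<psi> k. r * \<psi> k) ` Wreg I E s t d \<longleftrightarrow>
    (\<exists>c\<in>wt_coeffs I E s t d \<chi>. \<forall>x\<in>Widx E s t d. 0 \<le> c x \<and> c x \<le> r)"
proof
  assume "\<chi> \<in> (\<lambda>\<psi> k. r * \<psi> k) ` Wreg I E s t d"
  then obtain c c0 where c: "\<forall>x\<in>Widx E s t d. 0 \<le> c x \<and> c x \<le> 1"
    and "\<chi> = (\<lambda>k. r * wt_comb I E s t d c c0 k)"
    unfolding Wreg_eq_wt_comb by blast
  then have "(\<lambda>x. r * c x) \<in> wt_coeffs I E s t d \<chi>"
    unfolding wt_coeffs_def scale_wt_comb by blast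
  moreover have "\<forall>x\<in>Widx E s t d. 0 \<le> r * c x \<and> r * c x \<le> r"
    using c assms by simp
  ultimately show "\<exists>c\<in>wt_coeffs I E s t d \<chi>. \<forall>x\<in>Widx E s t d. 0 \<le> c x \<and> c x \<le> r"
    by (intro bexI[of _ "\<lambda>x. r * c x"]) simp_all
next
  assume "\<exists>c\<in>wt_coeffs I E s t d \<chi>. \<forall>x\<in>Widx E s t d. 0 \<le> c x \<and> c x \<le> r"
  then obtain c c0 where c: "\<forall>x\<in>Widx E s t d. 0 \<le> c x \<and> c x \<le> r"
    and \<chi>: "\<chi> = wt_comb I E s t d c c0"
    unfolding wt_coeffs_def by blast
  have "\<chi> = (\<lambda>k. r * wt_comb I E s t d (\<lambda>x. c x / r) (c0 / r) k)"
    using assms by (simp add: \<chi> scale_wt_comb)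
  moreover have "wt_comb I E s t d (\<lambda>x. c x / r) (c0 / r) \<in> Wreg I E s t d"
    using c assms unfolding Wreg_eq_wt_comb by auto
  ultimately show "\<chi> \<in> (\<lambda>\<psi> k. r * \<psi> k) ` Wreg I E s t d" by blast
qed

lemma r_inv_eq_Inf_wt_coeffs:
  "r_inv I E s t d \<chi> =
    Inf {r. 0 < r \<and> (\<exists>c\<in>wt_coeffs I E s t d \<chi>. \<forall>x\<in>Widx E s t d. 0 \<le> c x \<and> c x \<le> r)}"
  (is "_ = Inf ?P")
proof -
  \<comment> \<open>0 \<cdot> W = {0}, so r = 0 is admissible only for \<chi> = 0, and then so is every r > 0.\<close>
  define S where "S = {r. 0 \<le> r \<and> \<chi> \<in> (\<lambda>\<psi> k. r * \<psi> k) ` Wreg I E s t d}"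
  have S_pos: "r \<in> S \<longleftrightarrow> r \<in> ?P" if "0 < r" for r
    using mem_scaled_Wreg_iff[OF that, of \<chi> I E s t d] that by (simp add: S_def)
  have S_nonneg: "S \<subseteq> {0..}"
    by (auto simp: S_def)
  have "S = ?P" if "0 \<notin> S"
  proof (rule set_eqI)
    show "r \<in> S \<longleftrightarrow> r \<in> ?P" for r
      using that S_pos[of r] S_nonneg by (cases "0 < r") auto
  qed
  moreover have "S = {0..}" "?P = {0<..}" if "0 \<in> S"
  proof -
    from that have "\<chi> = wt_comb I E s t d (\<lambda>_. 0) 0"
      by (auto simp: S_def wt_comb_def)
    then show "?P = {0<..}"
      by (auto simp: wt_coeffs_def intro!: bexI[of _ "\<lambda>_. 0"])
    show "S = {0..}"
    proof (rule set_eqI)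
      show "r \<in> S \<longleftrightarrow> r \<in> {0..}" for r
        using that S_pos[of r] S_nonneg \<open>?P = {0<..}\<close> by (cases "0 < r") auto
    qed
  qed
  ultimately show ?thesis
    unfolding r_inv_def S_def[symmetric] by (cases "0 \<in> S") simp_all
qed

lemma p_inv_eq_Least_wt_coeffs:
  "p_inv I E s t d \<chi> = (let r = r_inv I E s t d \<chi> in
     LEAST n. \<exists>c\<in>wt_coeffs I E s t d \<chi>. (\<forall>x\<in>Widx E s t d. - r \<le> c x \<and> c x \<le> 0) \<and>
        n = card {x\<in>Widx E s t d. c x = - r})"
  unfolding p_inv_def wt_coeffs_def wt_comb_def Let_def
  by (intro arg_cong[where f = Least] ext) blast

lemma card_filter_bij_betw:
  assumes "bij_betw \<pi> A A"
  shows "card {x\<in>A. P (\<pi> x)} = card {x\<in>A. P x}"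
proof -
  have "\<pi> ` {x\<in>A. P (\<pi> x)} = {x\<in>A. P x}"
  proof
    show "\<pi> ` {x\<in>A. P (\<pi> x)} \<subseteq> {x\<in>A. P x}"
      using bij_betwE[OF assms] by auto
    show "{x\<in>A. P x} \<subseteq> \<pi> ` {x\<in>A. P (\<pi> x)}"
    proof
      fix y assume y: "y \<in> {x\<in>A. P x}"
      then have "y \<in> \<pi> ` A"
        using bij_betw_imp_surj_on[OF assms] by simp
      with y show "y \<in> \<pi> ` {x\<in>A. P (\<pi> x)}" by auto
    qed
  qed
  then have "bij_betw \<pi> {x\<in>A. P (\<pi> x)} {x\<in>A. P x}"
    by (intro bij_betw_subset[OF assms]) auto
  then show ?thesis
    by (rule bij_betw_same_card)
qed

lemma ex_wt_coeffs_iff_if_rearranged: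
  assumes "\<And>c. c \<in> wt_coeffs I E s t d \<chi> \<Longrightarrow>
      \<exists>\<pi>. bij_betw \<pi> (Widx E s t d) (Widx E s t d) \<and> c \<circ> \<pi> \<in> wt_coeffs I E s t d \<chi>'"
    and "\<And>c. c \<in> wt_coeffs I E s t d \<chi>' \<Longrightarrow>
      \<exists>\<pi>. bij_betw \<pi> (Widx E s t d) (Widx E s t d) \<and> c \<circ> \<pi> \<in> wt_coeffs I E s t d \<chi>"
    and P_comp: "\<And>c \<pi>. bij_betw \<pi> (Widx E s t d) (Widx E s t d) \<Longrightarrow> P c \<Longrightarrow> P (c \<circ> \<pi>)"
  shows "(\<exists>c\<in>wt_coeffs I E s t d \<chi>. P c) \<longleftrightarrow> (\<exists>c\<in>wt_coeffs I E s t d \<chi>'. P c)"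
proof
  assume "\<exists>c\<in>wt_coeffs I E s t d \<chi>. P c"
  then obtain c \<pi> where "P c" "bij_betw \<pi> (Widx E s t d) (Widx E s t d)"
    "c \<circ> \<pi> \<in> wt_coeffs I E s t d \<chi>'"
    using assms(1) by blast
  then show "\<exists>c\<in>wt_coeffs I E s t d \<chi>'. P c" using P_comp by blast
next
  assume "\<exists>c\<in>wt_coeffs I E s t d \<chi>'. P c"
  then obtain c \<pi> where "P c" "bij_betw \<pi> (Widx E s t d) (Widx E s t d)"
    "c \<circ> \<pi> \<in> wt_coeffs I E s t d \<chi>"
    using assms(2) by blast
  then show "\<exists>c\<in>wt_coeffs I E s t d \<chi>. P c" using P_comp by blast
qed

lemma rp_eq_if_wt_coeffs_rearranged:
  assumes "\<And>c. c \<in> wt_coeffs I E s t d \<chi> \<Longrightarrow>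
      \<exists>\<pi>. bij_betw \<pi> (Widx E s t d) (Widx E s t d) \<and> c \<circ> \<pi> \<in> wt_coeffs I E s t d \<chi>'"
    and "\<And>c. c \<in> wt_coeffs I E s t d \<chi>' \<Longrightarrow>
      \<exists>\<pi>. bij_betw \<pi> (Widx E s t d) (Widx E s t d) \<and> c \<circ> \<pi> \<in> wt_coeffs I E s t d \<chi>"
  shows "rp I E s t d \<chi> = rp I E s t d \<chi>'"
proof -
  let ?W = "Widx E s t d"
  note ex_coeffs_iff = ex_wt_coeffs_iff_if_rearranged[OF assms]
  have "(\<exists>c\<in>wt_coeffs I E s t d \<chi>. \<forall>x\<in>?W. 0 \<le> c x \<and> c x \<le> r)
    \<longleftrightarrow> (\<exists>c\<in>wt_coeffs I E s t d \<chi>'. \<forall>x\<in>?W. 0 \<le> c x \<and> c x \<le> r)" for r :: real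
  proof (rule ex_coeffs_iff)
    fix c \<pi> assume "bij_betw \<pi> ?W ?W" "\<forall>x\<in>?W. 0 \<le> c x \<and> c x \<le> r"
    then show "\<forall>x\<in>?W. 0 \<le> (c \<circ> \<pi>) x \<and> (c \<circ> \<pi>) x \<le> r"
      using bij_betw_ball[of \<pi> ?W ?W "\<lambda>y. 0 \<le> c y \<and> c y \<le> r"] by simp
  qed
  then have r_eq: "r_inv I E s t d \<chi> = r_inv I E s t d \<chi>'"
    unfolding r_inv_eq_Inf_wt_coeffs by simp
  have "(\<exists>c\<in>wt_coeffs I E s t d \<chi>. (\<forall>x\<in>?W. - r \<le> c x \<and> c x \<le> 0) \<and> n = card {x\<in>?W. c x = - r})
    \<longleftrightarrow> (\<exists>c\<in>wt_coeffs I E s t d \<chi>'. (\<forall>x\<in>?W. - r \<le> c x \<and> c x \<le> 0) \<and> n = card {x\<in>?W. c x = - r})"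
    for r :: real and n
  proof (rule ex_coeffs_iff)
    fix c \<pi> assume \<pi>: "bij_betw \<pi> ?W ?W"
      and "(\<forall>x\<in>?W. - r \<le> c x \<and> c x \<le> 0) \<and> n = card {x\<in>?W. c x = - r}"
    then show "(\<forall>x\<in>?W. - r \<le> (c \<circ> \<pi>) x \<and> (c \<circ> \<pi>) x \<le> 0) \<and> n = card {x\<in>?W. (c \<circ> \<pi>) x = - r}"
      using bij_betw_ball[OF \<pi>, of "\<lambda>y. - r \<le> c y \<and> c y \<le> 0"]
        card_filter_bij_betw[OF \<pi>, of "\<lambda>y. c y = - r"] by simp
  qed
  then show ?thesis
    unfolding rp_def p_inv_eq_Least_wt_coeffs r_eq by simp
qed

lemma wt_coeffs_add_tau:
  "wt_coeffs I E s t d (\<lambda>k. \<chi> k + a * tau I d k) = wt_coeffs I E s t d \<chi>"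
proof -
  have "(\<lambda>k. \<chi> k + a * tau I d k) = wt_comb I E s t d c c0 \<longleftrightarrow>
      \<chi> = wt_comb I E s t d c (c0 - a)" for c c0
    unfolding wt_comb_def fun_eq_iff by (auto simp: algebra_simps)
  then show ?thesis
    unfolding wt_coeffs_def by (auto intro: exI[of _ "_ - a"] exI[of _ "_ + a"])
qed

lemma rp_add_tau: "rp I E s t d (\<lambda>k. \<chi> k + a * tau I d k) = rp I E s t d \<chi>"
  using bij_betw_id by (intro rp_eq_if_wt_coeffs_rearranged) (auto simp: wt_coeffs_add_tau)

lemma bij_betw_Widx_fiberwise:
  assumes f: "\<And>a. a \<in> E \<Longrightarrow> f a permutes {1..d (s a)}"
    and g: "\<And>a. a \<in> E \<Longrightarrow> g a permutes {1..d (t a)}"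
  shows "bij_betw (\<lambda>(a, x, y). (a, f a x, g a y)) (Widx E s t d) (Widx E s t d)"
proof (rule bij_betwI[where g = "\<lambda>(a, x, y). (a, inv (f a) x, inv (g a) y)"])
  have f_in: "1 \<le> f a x \<and> f a x \<le> d (s a)" "1 \<le> inv (f a) x \<and> inv (f a) x \<le> d (s a)"
    if "a \<in> E" "1 \<le> x" "x \<le> d (s a)" for a x
    using that permutes_in_image[OF f, of a x] permutes_in_image[OF permutes_inv[OF f], of a x]
    by simp_all
  have g_in: "1 \<le> g a y \<and> g a y \<le> d (t a)" "1 \<le> inv (g a) y \<and> inv (g a) y \<le> d (t a)"
    if "a \<in> E" "1 \<le> y" "y \<le> d (t a)" for a y
    using that permutes_in_image[OF g, of a y] permutes_in_image[OF permutes_inv[OF g], of a y]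
    by simp_all
  show "(\<lambda>(a, x, y). (a, f a x, g a y)) \<in> Widx E s t d \<rightarrow> Widx E s t d"
    and "(\<lambda>(a, x, y). (a, inv (f a) x, inv (g a) y)) \<in> Widx E s t d \<rightarrow> Widx E s t d"
    using f_in g_in by (auto simp: Widx_def)
  show "(case (case z of (a, x, y) \<Rightarrow> (a, f a x, g a y)) of (a, x, y) \<Rightarrow> (a, inv (f a) x, inv (g a) y)) = z"
    and "(case (case z of (a, x, y) \<Rightarrow> (a, inv (f a) x, inv (g a) y)) of (a, x, y) \<Rightarrow> (a, f a x, g a y)) = z"
    if "z \<in> Widx E s t d" for z
    using that by (auto simp: Widx_def permutes_inverses[OF f] permutes_inverses[OF g])
qed

definition weyl_Widx_perm :: "('v \<Rightarrow> nat \<Rightarrow> nat) \<Rightarrow> ('e \<Rightarrow> 'v) \<Rightarrow> ('e \<Rightarrow> 'v)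
    \<Rightarrow> 'e \<times> nat \<times> nat \<Rightarrow> 'e \<times> nat \<times> nat" where
  "weyl_Widx_perm w s t = (\<lambda>(a, x, y). (a, inv (w (s a)) x, inv (w (t a)) y))"

lemma bij_betw_weyl_Widx_perm:
  assumes "s ` E \<subseteq> I" "t ` E \<subseteq> I" "w \<in> weyl I d"
  shows "bij_betw (weyl_Widx_perm w s t) (Widx E s t d) (Widx E s t d)"
  unfolding weyl_Widx_perm_def
  using assms by (intro bij_betw_Widx_fiberwise) (auto simp: weyl_def intro: permutes_inv)

lemma weyl_act_wt:
  assumes "bij (w (s a))" "bij (w (t a))"
  shows "weyl_act w (wt s t (weyl_Widx_perm w s t (a, x, y))) = wt s t (a, x, y)"
proof -
  have beta_inv: "beta v (inv (w v) z) (i, inv (w i) j) = beta v z (i, j)" if "bij (w v)" for v z i j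
  proof -
    have "inj (inv (w v))"
      using that bij_imp_bij_inv bij_is_inj by blast
    then show ?thesis
      by (cases "i = v") (auto simp: beta_def inj_eq)
  qed
  show ?thesis
    using beta_inv[OF assms(1)] beta_inv[OF assms(2)]
    by (simp add: fun_eq_iff weyl_act_def weyl_Widx_perm_def wt_def split: prod.split)
qed

lemma tau_eq_indicator:
  "tau I d k = (if finite (Bidx I d) \<and> k \<in> Bidx I d then 1 else 0) / real (\<Sum>i\<in>I. d i)"
proof -
  have "(\<lambda>(i, j). beta i j k) = (\<lambda>p. if k = p then (1::real) else 0)"
    by (auto simp: beta_def)
  then show ?thesis
    by (cases "finite (Bidx I d)") (simp_all add: tau_def)
qed

lemma weyl_act_tau:
  assumes "w \<in> weyl I d"
  shows "weyl_act w (tau I d) = tau I d"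
proof -
  have "(i, inv (w i) j) \<in> Bidx I d \<longleftrightarrow> (i, j) \<in> Bidx I d" for i j
  proof (cases "i \<in> I")
    case True
    then have "inv (w i) permutes {1..d i}"
      using assms permutes_inv by (auto simp: weyl_def)
    with True show ?thesis
      using permutes_in_image[of "inv (w i)" "{1..d i}" j] by (auto simp: Bidx_def)
  qed (simp add: Bidx_def)
  then show ?thesis
    by (simp add: fun_eq_iff weyl_act_def tau_eq_indicator)
qed

lemma weyl_act_wt_comb:
  assumes "s ` E \<subseteq> I" "t ` E \<subseteq> I" "w \<in> weyl I d"
  shows "weyl_act w (wt_comb I E s t d c c0) = wt_comb I E s t d (c \<circ> weyl_Widx_perm w s t) c0"
proof (rule ext)
  fix k
  let ?W = "Widx E s t d" and ?\<pi> = "weyl_Widx_perm w s t"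
  have wt_\<pi>: "weyl_act w (wt s t (?\<pi> z)) = wt s t z" if z_in: "z \<in> ?W" for z
  proof -
    obtain a x y where z: "z = (a, x, y)" and "a \<in> E"
      using z_in by (cases z) (auto simp: Widx_def)
    then have "w (s a) permutes {1..d (s a)}" "w (t a) permutes {1..d (t a)}"
      using assms by (auto simp: weyl_def)
    then have "bij (w (s a))" "bij (w (t a))"
      by (auto intro: permutes_bij)
    then show ?thesis
      unfolding z by (rule weyl_act_wt)
  qed
  have "weyl_act w (wt_comb I E s t d c c0) k
      = (\<Sum>x\<in>?W. c x * weyl_act w (wt s t x) k) + c0 * weyl_act w (tau I d) k"
    by (simp add: wt_comb_def weyl_act_def split: prod.split)
  also have "(\<Sum>x\<in>?W. c x * weyl_act w (wt s t x) k) = (\<Sum>z\<in>?W. c (?\<pi> z) * weyl_act w (wt s t (?\<pi> z)) k)"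
    using sum.reindex_bij_betw[OF bij_betw_weyl_Widx_perm[OF assms],
        of "\<lambda>x. c x * weyl_act w (wt s t x) k"] by simp
  also have "\<dots> = (\<Sum>z\<in>?W. c (?\<pi> z) * wt s t z k)"
    using wt_\<pi> by simp
  finally show "weyl_act w (wt_comb I E s t d c c0) k = wt_comb I E s t d (c \<circ> ?\<pi>) c0 k"
    using weyl_act_tau[OF assms(3)] by (simp add: wt_comb_def)
qed

(* The components of w off I are unconstrained, so they are replaced by the identity;
   weights in MR I d do not see them. *)
definition weyl_inv :: "'v set \<Rightarrow> ('v \<Rightarrow> nat \<Rightarrow> nat) \<Rightarrow> 'v \<Rightarrow> nat \<Rightarrow> nat" where
  "weyl_inv I w = (\<lambda>i. if i \<in> I then inv (w i) else id)"

lemma weyl_inv_mem_weyl: "w \<in> weyl I d \<Longrightarrow> weyl_inv I w \<in> weyl I d"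
  by (simp add: weyl_def weyl_inv_def permutes_inv)

lemma weyl_act_weyl_inv:
  assumes "w \<in> weyl I d" "\<chi> \<in> MR I d"
  shows "weyl_act (weyl_inv I w) (weyl_act w \<chi>) = \<chi>"
proof (rule ext, clarify)
  fix i j
  show "weyl_act (weyl_inv I w) (weyl_act w \<chi>) (i, j) = \<chi> (i, j)"
  proof (cases "i \<in> I")
    case True
    then have "w i permutes {1..d i}"
      using assms(1) by (simp add: weyl_def)
    with True show ?thesis
      by (simp add: weyl_act_def weyl_inv_def permutes_inv_inv permutes_inverses)
  next
    case False
    with assms(2) show ?thesis
      by (simp add: weyl_act_def weyl_inv_def MR_def Bidx_def)
  qed
qed

lemma rp_weyl_act:
  assumes "s ` E \<subseteq> I" "t ` E \<subseteq> I" "w \<in> weyl I d" "\<chi> \<in> MR I d"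
  shows "rp I E s t d (weyl_act w \<chi>) = rp I E s t d \<chi>"
proof (rule rp_eq_if_wt_coeffs_rearranged)
  have coeffs_weyl_act: "c \<circ> weyl_Widx_perm w' s t \<in> wt_coeffs I E s t d (weyl_act w' \<psi>)"
    if "w' \<in> weyl I d" "c \<in> wt_coeffs I E s t d \<psi>" for w' c \<psi>
    using that weyl_act_wt_comb[OF assms(1,2)] by (auto simp: wt_coeffs_def)
  fix c
  show "\<exists>\<pi>. bij_betw \<pi> (Widx E s t d) (Widx E s t d) \<and> c \<circ> \<pi> \<in> wt_coeffs I E s t d \<chi>"
    if "c \<in> wt_coeffs I E s t d (weyl_act w \<chi>)"
    using coeffs_weyl_act[OF weyl_inv_mem_weyl[OF assms(3)] that]
      bij_betw_weyl_Widx_perm[OF assms(1,2) weyl_inv_mem_weyl[OF assms(3)]]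
    by (auto simp: weyl_act_weyl_inv[OF assms(3,4)])
  show "\<exists>\<pi>. bij_betw \<pi> (Widx E s t d) (Widx E s t d) \<and> c \<circ> \<pi> \<in> wt_coeffs I E s t d (weyl_act w \<chi>)"
    if "c \<in> wt_coeffs I E s t d \<chi>"
    using coeffs_weyl_act[OF assms(3) that] bij_betw_weyl_Widx_perm[OF assms(1-3)] by blast
qed

lemma rho_mem_MR: "rho I d \<in> MR I d"
  by (auto simp: MR_def rho_def Bidx_def beta_def intro!: sum.neutral)

lemma dot_act_shift_eq_weyl_act:
  assumes "weyl_act w \<delta> = \<delta>"
  shows "(\<lambda>k. dot_act I d w \<chi> k + rho I d k + \<delta> k) = weyl_act w (\<lambda>k. \<chi> k + rho I d k + \<delta> k)"
  using assms by (auto simp: fun_eq_iff dot_act_def weyl_act_def)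

theorem proposition3p1:
  fixes I :: "'v set" and E :: "'e set" and s t :: "'e \<Rightarrow> 'v" and d :: "'v \<Rightarrow> nat"
  assumes "symmetric_quiver I E s t"
    and "standing_assumption I E s t d"
  shows "(\<forall>\<chi> \<chi>' (c::real). \<chi> \<in> MR I d \<and> \<chi>' \<in> MR I d \<and> \<chi>' = (\<lambda>k. \<chi> k + c * tau I d k)
            \<longrightarrow> rp I E s t d \<chi> = rp I E s t d \<chi>')
       \<and> (\<forall>\<chi> w \<delta>. \<chi> \<in> Mlat I d \<and> w \<in> weyl I d \<and> \<delta> \<in> MR I d \<and>
            (\<forall>w'\<in>weyl I d. weyl_act w' \<delta> = \<delta>)
            \<longrightarrow> rp I E s t d (\<lambda>k. \<chi> k + rho I d k + \<delta> k)
              = rp I E s t d (\<lambda>k. dot_act I d w \<chi> k + rho I d k + \<delta> k))"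
proof (intro conjI allI impI)
  fix \<chi> \<chi>' :: "'v \<times> nat \<Rightarrow> real" and c :: real
  assume "\<chi> \<in> MR I d \<and> \<chi>' \<in> MR I d \<and> \<chi>' = (\<lambda>k. \<chi> k + c * tau I d k)"
  then show "rp I E s t d \<chi> = rp I E s t d \<chi>'"
    by (simp add: rp_add_tau)
next
  fix \<chi> \<delta> :: "'v \<times> nat \<Rightarrow> real" and w
  assume "\<chi> \<in> Mlat I d \<and> w \<in> weyl I d \<and> \<delta> \<in> MR I d \<and> (\<forall>w'\<in>weyl I d. weyl_act w' \<delta> = \<delta>)"
  then have w: "w \<in> weyl I d" and \<delta>: "weyl_act w \<delta> = \<delta>"
    and shifted_MR: "(\<lambda>k. \<chi> k + rho I d k + \<delta> k) \<in> MR I d"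
    using rho_mem_MR[of I d] by (auto simp: Mlat_def MR_def)
  have arrows: "s ` E \<subseteq> I" "t ` E \<subseteq> I"
    using assms(1) by (auto simp: symmetric_quiver_def)
  show "rp I E s t d (\<lambda>k. \<chi> k + rho I d k + \<delta> k)
      = rp I E s t d (\<lambda>k. dot_act I d w \<chi> k + rho I d k + \<delta> k)"
    unfolding dot_act_shift_eq_weyl_act[OF \<delta>] rp_weyl_act[OF arrows w shifted_MR] ..
qed

end
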